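(* Let $d,m_1,\dots,m_d\in\mathbb N$ and $N=m_1\cdots m_d$. (a) For product weights $\gamma_{\mathfrak u}=\prod_{j\in\mathfrak u}\gamma_j$ (with $\gamma_j\in[0,1]$) and arbitrary real coefficients $\mathcal A(\Gamma_{m_1,\dots,m_d})$, for every $\ell\in[d]$ we have $D^*_{N,\boldsymbol\gamma}(\Gamma_{m_1,\dots,m_d},\mathcal A(\Gamma_{m_1,\dots,m_d}))\ge\frac{\gamma_\ell}{4m_\ell}$. (b) With QMC coefficients, $D^*_N(\Gamma_{m_1,\dots,m_d})=1-\prod_{j=1}^d\left(1-\frac{1}{2m_j}\right)$. (c) With QMC coefficients and arbitrary weights $\gamma_{\mathfrak u}\in[0,1]$ ($\emptyset\ne\mathfrak u\subseteq[d]$), $D^*_{N,\boldsymbol\gamma}(\Gamma_{m_1,\dots,m_d})=\max_{\emptyset\ne\mathfrak u\subseteq[d]}\gamma_{\mathfrak u}\left(1-\prod_{j\in\mathfrak u}\left(1-\frac{1}{2m_j}\right)\right)$ and $D^*_{N,\boldsymbol\gamma}(\Gamma_{m_1,\dots,m_d})\le\max_{\emptyset\ne\mathfrak u\subseteq[d]}\gamma_{\mathfrak u}\sum_{j\in\mathfrak u}\frac{1}{2m_j}$.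
   Context: Write $[d]=\{1,\dots,d\}$. The centered regular grid is $\Gamma_{m_1,\dots,m_d}=\{(\frac{2\ell_1+1}{2m_1},\dots,\frac{2\ell_d+1}{2m_d}) : \ell_j\in\{0,\dots,m_j-1\}\}$. For an $N$-point set $\mathcal P_d\subset[0,1)^d$ with real coefficients $\mathcal A(\mathcal P_d)=\{a_{\boldsymbol x}:\boldsymbol x\in\mathcal P_d\}$, the local discrepancy is $\Delta_{\mathcal P_d,\mathcal A(\mathcal P_d)}(\boldsymbol\alpha)=\sum_{\boldsymbol x\in\mathcal P_d}a_{\boldsymbol x}\mathbf 1_{[\boldsymbol 0,\boldsymbol\alpha)}(\boldsymbol x)-\prod_{j=1}^d\alpha_j$ for $\boldsymbol\alpha\in[0,1]^d$, with $[\boldsymbol 0,\boldsymbol\alpha)=[0,\alpha_1)\times\cdots\times[0,\alpha_d)$. The $\boldsymbol\gamma$-weighted star discrepancy is $D^*_{N,\boldsymbol\gamma}(\mathcal P_d,\mathcal A(\mathcal P_d))=\sup_{\boldsymbol\alpha\in[0,1]^d}\max_{\emptyset\ne\mathfrak u\subseteq[d]}\gamma_{\mathfrak u}|\Delta_{\mathcal P_d,\mathcal A(\mathcal P_d)}((\boldsymbol\alpha_{\mathfrak u},\boldsymbol 1))|$, where $(\boldsymbol\alpha_{\mathfrak u},\boldsymbol 1)=(y_1,\dots,y_d)$ with $y_j=\alpha_j$ for $j\in\mathfrak u$ and $y_j=1$ otherwise. QMC coefficients means $a_{\boldsymbol x}=1/N$ for all $\boldsymbol x$; in that case one writes $D^*_{N,\boldsymbol\gamma}(\mathcal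 P_d)$. The (unweighted) star discrepancy with QMC coefficients is $D^*_N(\mathcal P_d)=\sup_{\boldsymbol\alpha\in[0,1]^d}|\Delta_{\mathcal P_d}(\boldsymbol\alpha)|$ (the case $\gamma_{[d]}=1$, $\gamma_{\mathfrak u}=0$ for $\mathfrak u\subsetneq[d]$). *)

theory Defs
  imports "HOL-Analysis.Analysis"
begin

text \<open>Points of [0,1)^d are modelled as functions nat => real; only the
coordinates 1..d are relevant (index set [d] = {1..d}).\<close>

definition centered_grid :: "nat \<Rightarrow> (nat \<Rightarrow> nat) \<Rightarrow> (nat \<Rightarrow> real) set" where
  "centered_grid d m = {x. \<exists>l::nat \<Rightarrow> nat. (\<forall>j\<in>{1..d}. l j < m j) \<and>
      x = (\<lambda>j. if j \<in> {1..d} then (2 * real (l j) + 1) / (2 * real (m j)) else 0)}"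

definition local_disc :: "nat \<Rightarrow> (nat \<Rightarrow> real) set \<Rightarrow> ((nat \<Rightarrow> real) \<Rightarrow> real) \<Rightarrow> (nat \<Rightarrow> real) \<Rightarrow> real" where
  "local_disc d P a \<alpha> =
     (\<Sum>x\<in>P. a x * (if \<forall>j\<in>{1..d}. 0 \<le> x j \<and> x j < \<alpha> j then 1 else 0)) - (\<Prod>j\<in>{1..d}. \<alpha> j)"

definition unit_box :: "nat \<Rightarrow> (nat \<Rightarrow> real) set" where
  "unit_box d = {\<alpha>. \<forall>j\<in>{1..d}. 0 \<le> \<alpha> j \<and> \<alpha> j \<le> 1}"

definition weighted_star_disc :: "nat \<Rightarrow> (nat \<Rightarrow> real) set \<Rightarrow> ((nat \<Rightarrow> real) \<Rightarrow> real) \<Rightarrow> (nat set \<Rightarrow> real) \<Rightarrow> real" where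
  "weighted_star_disc d P a \<gamma> =
     (SUP p \<in> {(\<alpha>, u). \<alpha> \<in> unit_box d \<and> u \<noteq> {} \<and> u \<subseteq> {1..d}}.
        \<gamma> (snd p) * \<bar>local_disc d P a (\<lambda>j. if j \<in> snd p then fst p j else 1)\<bar>)"

definition star_disc :: "nat \<Rightarrow> (nat \<Rightarrow> real) set \<Rightarrow> ((nat \<Rightarrow> real) \<Rightarrow> real) \<Rightarrow> real" where
  "star_disc d P a = (SUP \<alpha> \<in> unit_box d. \<bar>local_disc d P a \<alpha>\<bar>)"

end

theory Submission
  imports Defs
begin

text \<open>With QMC coefficients the local discrepancy of the centered grid at \<open>\<alpha>\<close> factorizes as
  \<open>\<Prod>\<^sub>j c\<^sub>j(\<alpha>\<^sub>j) - \<Prod>\<^sub>j \<alpha>\<^sub>j\<close>, where \<open>c\<^sub>j(t)\<close> is the fraction of the midpoints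
  \<open>(2k+1)/(2m\<^sub>j)\<close> below \<open>t\<close>. Since \<open>|c\<^sub>j(t) - t| \<le> 1/(2m\<^sub>j)\<close>, an elementary estimate for
  differences of products of numbers in \<open>[0,1]\<close> bounds its modulus on the face \<open>u\<close> by
  \<open>1 - \<Prod>\<^bsub>j\<in>u\<^esub> (1 - 1/(2m\<^sub>j))\<close>, and this bound is approached at corners just above
  \<open>1 - 1/(2m\<^sub>j)\<close>, where every count is full. For arbitrary coefficients, the box
  \<open>[0, 1/(2m\<^sub>l))\<close> in direction \<open>l\<close> contains no grid point, so there the discrepancy is
  minus its volume.\<close>

abbreviation with_ones :: "nat set \<Rightarrow> (nat \<Rightarrow> real) \<Rightarrow> nat \<Rightarrow> real" where
  "with_ones u \<alpha> \<equiv> (\<lambda>j. if j \<in> u then \<alpha> j else 1)"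

lemma local_disc_cong:
  assumes "\<And>j. j \<in> {1..d} \<Longrightarrow> \<alpha> j = \<beta> j"
  shows "local_disc d P a \<alpha> = local_disc d P a \<beta>"
  unfolding local_disc_def using assms by simp

lemma with_ones_in_unit_box: "\<alpha> \<in> unit_box d \<Longrightarrow> with_ones u \<alpha> \<in> unit_box d"
  unfolding unit_box_def by auto

lemma abs_local_disc_le:
  assumes "finite P" "\<beta> \<in> unit_box d"
  shows "\<bar>local_disc d P a \<beta>\<bar> \<le> (\<Sum>x\<in>P. \<bar>a x\<bar>) + 1"
proof -
  have "\<bar>\<Sum>x\<in>P. a x * (if \<forall>j\<in>{1..d}. 0 \<le> x j \<and> x j < \<beta> j then 1 else 0)\<bar> \<le> (\<Sum>x\<in>P. \<bar>a x\<bar>)"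
    by (rule order_trans[OF sum_abs sum_mono]) auto
  moreover have "(\<Prod>j\<in>{1..d}. \<beta> j) \<in> {0..1}"
    using assms(2) unfolding unit_box_def by (auto intro: prod_nonneg prod_le_1)
  ultimately show ?thesis unfolding local_disc_def by auto
qed

lemma le_weighted_star_disc:
  assumes "finite P" "\<And>u. u \<noteq> {} \<Longrightarrow> u \<subseteq> {1..d} \<Longrightarrow> \<gamma> u \<le> 1"
    and "u \<noteq> {}" "u \<subseteq> {1..d}" "\<alpha> \<in> unit_box d"
  shows "\<gamma> u * \<bar>local_disc d P a (with_ones u \<alpha>)\<bar> \<le> weighted_star_disc d P a \<gamma>"
proof -
  have bdd: "bdd_above ((\<lambda>p. \<gamma> (snd p) * \<bar>local_disc d P a (with_ones (snd p) (fst p))\<bar>) `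
      {(\<alpha>, u). \<alpha> \<in> unit_box d \<and> u \<noteq> {} \<and> u \<subseteq> {1..d}})"
  proof (rule bdd_aboveI2)
    fix p assume "p \<in> {(\<alpha>, u). \<alpha> \<in> unit_box d \<and> u \<noteq> {} \<and> u \<subseteq> {1..d}}"
    then have "\<gamma> (snd p) \<le> 1" "fst p \<in> unit_box d" using assms(2) by force+
    then have "\<gamma> (snd p) * \<bar>local_disc d P a (with_ones (snd p) (fst p))\<bar>
        \<le> 1 * \<bar>local_disc d P a (with_ones (snd p) (fst p))\<bar>"
      by (intro mult_right_mono) auto
    then show "\<gamma> (snd p) * \<bar>local_disc d P a (with_ones (snd p) (fst p))\<bar> \<le> (\<Sum>x\<in>P. \<bar>a x\<bar>) + 1"
      using abs_local_disc_le[OF assms(1) with_ones_in_unit_box[OF \<open>fst p \<in> unit_box d\<close>]]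
      by (simp add: order_trans)
  qed
  have "(\<alpha>, u) \<in> {(\<alpha>, u). \<alpha> \<in> unit_box d \<and> u \<noteq> {} \<and> u \<subseteq> {1..d}}"
    using assms by simp
  from cSUP_upper[OF this bdd] show ?thesis
    unfolding weighted_star_disc_def by (simp only: fst_conv snd_conv)
qed

lemma weighted_star_disc_le:
  assumes "d \<ge> 1"
    and "\<And>u \<alpha>. u \<noteq> {} \<Longrightarrow> u \<subseteq> {1..d} \<Longrightarrow> \<alpha> \<in> unit_box d \<Longrightarrow>
      \<gamma> u * \<bar>local_disc d P a (with_ones u \<alpha>)\<bar> \<le> M"
  shows "weighted_star_disc d P a \<gamma> \<le> M"
  unfolding weighted_star_disc_def
proof (rule cSUP_least)
  have "(\<lambda>_. 0) \<in> unit_box d" unfolding unit_box_def by simp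
  then show "{(\<alpha>, u). \<alpha> \<in> unit_box d \<and> u \<noteq> {} \<and> u \<subseteq> {1..d}} \<noteq> {}"
    using assms(1) by force
qed (use assms(2) in force)

lemma abs_local_disc_le_star_disc:
  assumes "finite P" "\<alpha> \<in> unit_box d"
  shows "\<bar>local_disc d P a \<alpha>\<bar> \<le> star_disc d P a"
  unfolding star_disc_def
  using assms abs_local_disc_le by (intro cSUP_upper bdd_aboveI2) auto

lemma star_disc_le:
  assumes "\<And>\<alpha>. \<alpha> \<in> unit_box d \<Longrightarrow> \<bar>local_disc d P a \<alpha>\<bar> \<le> M"
  shows "star_disc d P a \<le> M"
  unfolding star_disc_def
proof (rule cSUP_least)
  show "unit_box d \<noteq> {}" unfolding unit_box_def by force
qed (rule assms)

lemma abs_mult_diff_le: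
  fixes a b A B \<delta> \<epsilon> :: real
  assumes "a \<in> {0..1}" "b \<in> {0..1}" "A \<in> {0..1}" "B \<in> {0..1}"
    and "\<bar>a - b\<bar> \<le> \<delta>" "\<delta> \<le> 1" "\<bar>A - B\<bar> \<le> \<epsilon>" "\<epsilon> \<le> 1"
  shows "\<bar>a * A - b * B\<bar> \<le> 1 - (1 - \<delta>) * (1 - \<epsilon>)"
proof -
  have nonneg: "0 \<le> \<delta>" "0 \<le> \<epsilon>" using assms by linarith+
  have one_sided: "x * X - y * Y \<le> 1 - (1 - \<delta>) * (1 - \<epsilon>)"
    if "x \<in> {0..1}" "y \<in> {0..1}" "X \<in> {0..1}" "Y \<in> {0..1}" "x - y \<le> \<delta>" "X - Y \<le> \<epsilon>"
    for x y X Y :: real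
  proof -
    define s where "s = min x \<delta>"
    define r where "r = min X \<epsilon>"
    \<comment> \<open>\<open>x - s\<close> and \<open>X - r\<close> are the best lower bounds for \<open>y\<close> and \<open>Y\<close>, so
        \<open>x X - y Y \<le> (x - s) r + s X \<le> (1 - s) \<epsilon> + s\<close>.\<close>
    have "(x - s) * (X - r) \<le> y * Y"
      using that nonneg by (intro mult_mono) (auto simp: s_def r_def)
    moreover have "x * X - (x - s) * (X - r) = (x - s) * r + s * X" by algebra
    moreover have "(x - s) * r \<le> (1 - s) * \<epsilon>"
      using that nonneg by (intro mult_mono) (auto simp: s_def r_def)
    moreover have "s * X \<le> s" using that nonneg by (intro mult_left_le) (auto simp: s_def)
    moreover have "(1 - s) * \<epsilon> + s = 1 - (1 - s) * (1 - \<epsilon>)" by algebra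
    moreover have "(1 - \<delta>) * (1 - \<epsilon>) \<le> (1 - s) * (1 - \<epsilon>)"
      using assms by (intro mult_right_mono) (auto simp: s_def)
    ultimately show ?thesis by linarith
  qed
  have "a * A - b * B \<le> 1 - (1 - \<delta>) * (1 - \<epsilon>)" "b * B - a * A \<le> 1 - (1 - \<delta>) * (1 - \<epsilon>)"
    using assms by (intro one_sided; auto)+
  then show ?thesis by linarith
qed

lemma abs_prod_diff_le:
  fixes a b e :: "'i \<Rightarrow> real"
  assumes "finite S"
    and "\<And>j. j \<in> S \<Longrightarrow> a j \<in> {0..1} \<and> b j \<in> {0..1} \<and> \<bar>a j - b j\<bar> \<le> e j \<and> e j \<le> 1"
  shows "\<bar>(\<Prod>j\<in>S. a j) - (\<Prod>j\<in>S. b j)\<bar> \<le> 1 - (\<Prod>j\<in>S. 1 - e j)"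
  using assms
proof (induction S rule: finite_induct)
  case empty
  then show ?case by simp
next
  case (insert i S)
  have "prod a S \<in> {0..1}" "prod b S \<in> {0..1}"
    using insert.prems by (auto intro: prod_nonneg prod_le_1)
  moreover have "(\<Prod>j\<in>S. 1 - e j) \<ge> 0"
    using insert.prems by (intro prod_nonneg) force
  ultimately have "\<bar>a i * prod a S - b i * prod b S\<bar> \<le> 1 - (1 - e i) * (1 - (1 - (\<Prod>j\<in>S. 1 - e j)))"
    using insert by (intro abs_mult_diff_le) auto
  then show ?case using insert.hyps by simp
qed

lemma one_minus_prod_one_minus_le_sum:
  fixes e :: "'i \<Rightarrow> real"
  assumes "\<And>j. j \<in> S \<Longrightarrow> e j \<in> {0..1}"
  shows "1 - (\<Prod>j\<in>S. 1 - e j) \<le> (\<Sum>j\<in>S. e j)"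
proof -
  have "\<bar>(\<Prod>j\<in>S. 1) - (\<Prod>j\<in>S. 1 - e j)\<bar> \<le> (\<Sum>j\<in>S. \<bar>1 - (1 - e j)\<bar>)"
    using norm_prod_diff[of S "\<lambda>_. 1" "\<lambda>j. 1 - e j"] assms by force
  then show ?thesis using assms by simp
qed

definition grid_count :: "nat \<Rightarrow> real \<Rightarrow> real" where
  "grid_count m t = real (card {k. k < m \<and> (2 * real k + 1) / (2 * real m) < t}) / real m"

lemma card_centered_points_below:
  assumes "m \<ge> 1" "t \<le> 1"
  shows "card {k. k < m \<and> (2 * real k + 1) / (2 * real m) < t} = nat \<lceil>real m * t - 1/2\<rceil>"
proof -
  have below_iff: "(2 * real k + 1) / (2 * real m) < t \<longleftrightarrow> int k < \<lceil>real m * t - 1/2\<rceil>" for k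
  proof -
    have "(2 * real k + 1) / (2 * real m) < t \<longleftrightarrow> 2 * real k + 1 < t * (2 * real m)"
      using assms by (simp add: pos_divide_less_eq)
    also have "\<dots> \<longleftrightarrow> real k < real m * t - 1/2" by (simp add: algebra_simps) linarith
    finally show ?thesis by (simp add: less_ceiling_iff)
  qed
  have "real m * t \<le> real m" using assms mult_left_le[of t "real m"] by simp
  then have "\<lceil>real m * t - 1/2\<rceil> \<le> int m" by (simp add: ceiling_le_iff)
  then have "{k. k < m \<and> (2 * real k + 1) / (2 * real m) < t} = {..<nat \<lceil>real m * t - 1/2\<rceil>}"
    unfolding below_iff by auto
  then show ?thesis by simp
qed

lemma grid_count_bounds:
  assumes "m \<ge> 1" "t \<in> {0..1}"
  shows "grid_count m t \<in> {0..1}" "\<bar>grid_count m t - t\<bar> \<le> 1 / (2 * real m)"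
proof -
  define c where "c = \<lceil>real m * t - 1/2\<rceil>"
  have c_bounds: "real m * t - 1/2 \<le> c" "c < real m * t + 1/2"
    unfolding c_def by linarith+
  have "0 \<le> real m * t" "real m * t \<le> real m"
    using assms by (auto simp: mult_left_le)
  then have "0 \<le> c" "c \<le> int m"
    using c_bounds by (linarith, simp add: c_def ceiling_le_iff)
  moreover have count: "grid_count m t = c / real m"
    using assms card_centered_points_below \<open>0 \<le> c\<close> unfolding grid_count_def c_def by simp
  ultimately show "grid_count m t \<in> {0..1}" using assms by simp
  have "\<bar>grid_count m t - t\<bar> = \<bar>c - real m * t\<bar> / real m"
    using assms unfolding count by (simp add: field_simps)
  also have "\<dots> \<le> (1/2) / real m"
    using c_bounds by (intro divide_right_mono) linarith+
  finally show "\<bar>grid_count m t - t\<bar> \<le> 1 / (2 * real m)" by simp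
qed

lemma grid_count_eq_1:
  assumes "m \<ge> 1" "1 - 1 / (2 * real m) < t" "t \<le> 1"
  shows "grid_count m t = 1"
proof -
  have "real m - 1/2 < real m * t" "real m * t \<le> real m"
    using assms by (simp_all add: field_simps mult_left_le)
  then have "\<lceil>real m * t - 1/2\<rceil> = int m"
    by (intro ceiling_unique) auto
  then show ?thesis
    using assms card_centered_points_below unfolding grid_count_def by simp
qed

definition grid_point :: "nat \<Rightarrow> (nat \<Rightarrow> nat) \<Rightarrow> (nat \<Rightarrow> nat) \<Rightarrow> nat \<Rightarrow> real" where
  "grid_point d m l = (\<lambda>j. if j \<in> {1..d} then (2 * real (l j) + 1) / (2 * real (m j)) else 0)"

lemma centered_grid_eq_image:
  "centered_grid d m = grid_point d m ` (\<Pi>\<^sub>E j\<in>{1..d}. {..<m j})"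
proof
  show "centered_grid d m \<subseteq> grid_point d m ` (\<Pi>\<^sub>E j\<in>{1..d}. {..<m j})"
  proof
    fix x assume "x \<in> centered_grid d m"
    then obtain l where "\<forall>j\<in>{1..d}. l j < m j" "x = grid_point d m l"
      unfolding centered_grid_def grid_point_def by blast
    moreover have "grid_point d m l = grid_point d m (restrict l {1..d})"
      unfolding grid_point_def by auto
    ultimately show "x \<in> grid_point d m ` (\<Pi>\<^sub>E j\<in>{1..d}. {..<m j})" by fastforce
  qed
qed (auto simp: centered_grid_def grid_point_def PiE_iff)

lemma inj_on_grid_point:
  assumes "\<forall>j\<in>{1..d}. m j \<ge> 1"
  shows "inj_on (grid_point d m) (\<Pi>\<^sub>E j\<in>{1..d}. {..<m j})"
proof
  fix l l' assume l: "l \<in> (\<Pi>\<^sub>E j\<in>{1..d}. {..<m j})" "l' \<in> (\<Pi>\<^sub>E j\<in>{1..d}. {..<m j})"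
    and eq: "grid_point d m l = grid_point d m l'"
  show "l = l'"
  proof (rule PiE_ext[OF l])
    fix j assume "j \<in> {1..d}"
    moreover from this assms have "m j \<ge> 1" by blast
    ultimately show "l j = l' j"
      using fun_cong[OF eq, of j] unfolding grid_point_def by simp
  qed
qed

lemma finite_centered_grid: "finite (centered_grid d m)"
  unfolding centered_grid_eq_image by (intro finite_imageI finite_PiE) auto

lemma local_disc_centered_grid:
  assumes "\<forall>j\<in>{1..d}. m j \<ge> 1"
  shows "local_disc d (centered_grid d m) (\<lambda>_. 1 / (\<Prod>j\<in>{1..d}. real (m j))) \<alpha>
     = (\<Prod>j\<in>{1..d}. grid_count (m j) (\<alpha> j)) - (\<Prod>j\<in>{1..d}. \<alpha> j)"
proof -
  define L where "L = (\<Pi>\<^sub>E j\<in>{1..d}. {..<m j})"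
  define K where "K = (\<lambda>j. {k. k < m j \<and> (2 * real k + 1) / (2 * real (m j)) < \<alpha> j})"
  have "(\<Sum>x\<in>centered_grid d m. (if \<forall>j\<in>{1..d}. 0 \<le> x j \<and> x j < \<alpha> j then 1 else 0))
      = (\<Sum>l\<in>L. (if \<forall>j\<in>{1..d}. 0 \<le> grid_point d m l j \<and> grid_point d m l j < \<alpha> j then 1 else 0))"
    unfolding centered_grid_eq_image L_def using inj_on_grid_point[OF assms] by (simp add: sum.reindex)
  also have "\<dots> = (\<Sum>l\<in>L. (if l \<in> (\<Pi>\<^sub>E j\<in>{1..d}. K j) then 1 else 0))"
    by (intro sum.cong) (auto simp: L_def K_def grid_point_def PiE_iff)
  also have "\<dots> = real (card (\<Pi>\<^sub>E j\<in>{1..d}. K j))"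
    by (subst sum.If_cases) (auto simp: L_def K_def PiE_iff intro!: arg_cong[where f=card] finite_PiE)
  also have "\<dots> = (\<Prod>j\<in>{1..d}. real (card (K j)))" by (simp add: card_PiE)
  finally show ?thesis
    unfolding local_disc_def grid_count_def K_def
    by (simp add: prod_dividef flip: sum_divide_distrib)
qed

lemma local_disc_centered_grid_with_ones:
  assumes "\<forall>j\<in>{1..d}. m j \<ge> 1" "u \<subseteq> {1..d}"
  shows "local_disc d (centered_grid d m) (\<lambda>_. 1 / (\<Prod>j\<in>{1..d}. real (m j))) (with_ones u \<alpha>)
     = (\<Prod>j\<in>u. grid_count (m j) (\<alpha> j)) - (\<Prod>j\<in>u. \<alpha> j)"
proof -
  have "grid_count (m j) 1 = 1" if "j \<in> {1..d}" for j
    using assms(1) that by (intro grid_count_eq_1) force+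
  then have "(\<Prod>j\<in>{1..d}. grid_count (m j) (with_ones u \<alpha> j)) = (\<Prod>j\<in>{1..d}. if j \<in> u then grid_count (m j) (\<alpha> j) else 1)"
    by (intro prod.cong) auto
  moreover have "{1..d} \<inter> u = u" using assms by blast
  ultimately show ?thesis
    unfolding local_disc_centered_grid[OF assms(1)] by (simp add: prod.If_cases)
qed

lemma abs_local_disc_centered_grid_le:
  assumes "\<forall>j\<in>{1..d}. m j \<ge> 1" "u \<subseteq> {1..d}" "\<alpha> \<in> unit_box d"
  shows "\<bar>local_disc d (centered_grid d m) (\<lambda>_. 1 / (\<Prod>j\<in>{1..d}. real (m j))) (with_ones u \<alpha>)\<bar>
     \<le> 1 - (\<Prod>j\<in>u. 1 - 1 / (2 * real (m j)))"
  unfolding local_disc_centered_grid_with_ones[OF assms(1,2)]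
proof (rule abs_prod_diff_le)
  show "finite u" using assms(2) finite_subset by blast
  fix j assume "j \<in> u"
  then have "m j \<ge> 1" "\<alpha> j \<in> {0..1}" using assms unfolding unit_box_def by auto
  then show "grid_count (m j) (\<alpha> j) \<in> {0..1} \<and> \<alpha> j \<in> {0..1} \<and>
      \<bar>grid_count (m j) (\<alpha> j) - \<alpha> j\<bar> \<le> 1 / (2 * real (m j)) \<and> 1 / (2 * real (m j)) \<le> 1"
    using grid_count_bounds by simp
qed

text \<open>The corners \<open>\<alpha>\<^sub>j = 1 - t / (2 m\<^sub>j)\<close>, \<open>0 < t < 1\<close>, lie above every grid point, so the
  discrepancy there is \<open>1 - \<Prod>\<^sub>j (1 - t / (2 m\<^sub>j))\<close>; let \<open>t \<rightarrow> 1\<^sup>-\<close>.\<close>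

lemma centered_grid_disc_bound_least:
  assumes "\<forall>j\<in>{1..d}. m j \<ge> 1" "u \<subseteq> {1..d}" "0 \<le> c"
    and upper: "\<And>\<alpha>. \<alpha> \<in> unit_box d \<Longrightarrow>
      c * \<bar>local_disc d (centered_grid d m) (\<lambda>_. 1 / (\<Prod>j\<in>{1..d}. real (m j))) (with_ones u \<alpha>)\<bar> \<le> S"
  shows "c * (1 - (\<Prod>j\<in>u. 1 - 1 / (2 * real (m j)))) \<le> S"
proof (rule tendsto_upperbound)
  have pos: "real (m j) > 0" if "j \<in> u" for j
    using assms that by force
  show "((\<lambda>t. c * (1 - (\<Prod>j\<in>u. 1 - t / (2 * real (m j))))) \<longlongrightarrow>
      c * (1 - (\<Prod>j\<in>u. 1 - 1 / (2 * real (m j))))) (at_left 1)"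
    using pos by (intro tendsto_intros) auto
  show "\<forall>\<^sub>F t in at_left 1. c * (1 - (\<Prod>j\<in>u. 1 - t / (2 * real (m j)))) \<le> S"
  proof (rule eventually_at_left_1)
    fix t :: real assume t: "0 < t" "t < 1"
    define \<alpha> where "\<alpha> = (\<lambda>j. 1 - t / (2 * real (m j)))"
    have \<alpha>j: "\<alpha> j \<in> {0..1}" "1 - 1 / (2 * real (m j)) < \<alpha> j" if "j \<in> {1..d}" for j
    proof -
      have "m j \<ge> 1" using assms that by blast
      then show "\<alpha> j \<in> {0..1}" "1 - 1 / (2 * real (m j)) < \<alpha> j"
        using t unfolding \<alpha>_def by (auto simp: field_simps)
    qed
    have "(\<Prod>j\<in>u. grid_count (m j) (\<alpha> j)) = 1"
      using assms \<alpha>j by (intro prod.neutral ballI grid_count_eq_1) force+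
    moreover have "(\<Prod>j\<in>u. \<alpha> j) \<le> 1"
      using assms \<alpha>j by (intro prod_le_1) force+
    moreover have "\<alpha> \<in> unit_box d"
      using \<alpha>j unfolding unit_box_def by auto
    ultimately show "c * (1 - (\<Prod>j\<in>u. 1 - t / (2 * real (m j)))) \<le> S"
      using upper unfolding local_disc_centered_grid_with_ones[OF assms(1,2)] \<alpha>_def by force
  qed
qed simp

lemma local_disc_centered_grid_empty_slab:
  assumes "l \<in> {1..d}" "m l \<ge> 1"
  shows "local_disc d (centered_grid d m) a (with_ones {l} (\<lambda>_. 1 / (2 * real (m l))))
    = - 1 / (2 * real (m l))"
proof -
  have "1 / (2 * real (m l)) \<le> x l" if "x \<in> centered_grid d m" for x
    using that assms unfolding centered_grid_def by (auto simp: divide_right_mono)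
  then have "(\<Sum>x\<in>centered_grid d m. a x *
      (if \<forall>j\<in>{1..d}. 0 \<le> x j \<and> x j < with_ones {l} (\<lambda>_. 1 / (2 * real (m l))) j then 1 else 0)) = 0"
    using assms(1) by (intro sum.neutral) force
  moreover have "(\<Prod>j\<in>{1..d}. with_ones {l} (\<lambda>_. 1 / (2 * real (m l))) j) = 1 / (2 * real (m l))"
    using assms(1) by (simp add: prod.If_cases Int_absorb1)
  ultimately show ?thesis unfolding local_disc_def by simp
qed

lemma weighted_star_disc_centered_grid_ge:
  assumes "\<forall>j\<in>{1..d}. m j \<ge> 1" "\<forall>j\<in>{1..d}. 0 \<le> g j \<and> g j \<le> 1" "l \<in> {1..d}"
  shows "g l / (2 * real (m l)) \<le> weighted_star_disc d (centered_grid d m) a (\<lambda>u. \<Prod>j\<in>u. g j)"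
proof -
  have ml: "m l \<ge> 1" using assms(1,3) by blast
  have "(\<Prod>j\<in>{l}. g j) * \<bar>local_disc d (centered_grid d m) a (with_ones {l} (\<lambda>_. 1 / (2 * real (m l))))\<bar>
      \<le> weighted_star_disc d (centered_grid d m) a (\<lambda>u. \<Prod>j\<in>u. g j)"
  proof (rule le_weighted_star_disc[OF finite_centered_grid])
    show "(\<Prod>j\<in>u. g j) \<le> 1" if "u \<subseteq> {1..d}" for u
      using assms(2) that by (intro prod_le_1) auto
    show "(\<lambda>_. 1 / (2 * real (m l))) \<in> unit_box d"
      using ml unfolding unit_box_def by simp
  qed (use assms(3) in auto)
  then show ?thesis
    unfolding local_disc_centered_grid_empty_slab[of l d m, OF assms(3) ml] by simp
qed

lemma star_disc_centered_grid:
  assumes "\<forall>j\<in>{1..d}. m j \<ge> 1"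
  shows "star_disc d (centered_grid d m) (\<lambda>_. 1 / (\<Prod>j\<in>{1..d}. real (m j)))
    = 1 - (\<Prod>j\<in>{1..d}. 1 - 1 / (2 * real (m j)))"
    (is "star_disc d ?G ?a = _")
proof (rule antisym)
  have full_face: "local_disc d ?G ?a \<alpha> = local_disc d ?G ?a (with_ones {1..d} \<alpha>)" for \<alpha>
    by (rule local_disc_cong) simp
  show "star_disc d ?G ?a \<le> 1 - (\<Prod>j\<in>{1..d}. 1 - 1 / (2 * real (m j)))"
  proof (rule star_disc_le)
    fix \<alpha> assume "\<alpha> \<in> unit_box d"
    then show "\<bar>local_disc d ?G ?a \<alpha>\<bar> \<le> 1 - (\<Prod>j\<in>{1..d}. 1 - 1 / (2 * real (m j)))"
      unfolding full_face[of \<alpha>] by (rule abs_local_disc_centered_grid_le[OF assms order_refl])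
  qed
  have "1 * (1 - (\<Prod>j\<in>{1..d}. 1 - 1 / (2 * real (m j)))) \<le> star_disc d ?G ?a"
  proof (rule centered_grid_disc_bound_least[OF assms order_refl])
    fix \<alpha> assume "\<alpha> \<in> unit_box d"
    then show "1 * \<bar>local_disc d ?G ?a (with_ones {1..d} \<alpha>)\<bar> \<le> star_disc d ?G ?a"
      unfolding mult_1 by (intro abs_local_disc_le_star_disc finite_centered_grid with_ones_in_unit_box)
  qed simp
  then show "1 - (\<Prod>j\<in>{1..d}. 1 - 1 / (2 * real (m j))) \<le> star_disc d ?G ?a" by simp
qed

lemma weighted_star_disc_centered_grid:
  assumes "d \<ge> 1" "\<forall>j\<in>{1..d}. m j \<ge> 1"
    and "\<forall>u. u \<noteq> {} \<and> u \<subseteq> {1..d} \<longrightarrow> 0 \<le> \<gamma> u \<and> \<gamma> u \<le> 1"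
  shows "weighted_star_disc d (centered_grid d m) (\<lambda>_. 1 / (\<Prod>j\<in>{1..d}. real (m j))) \<gamma>
    = Max {\<gamma> u * (1 - (\<Prod>j\<in>u. 1 - 1 / (2 * real (m j)))) | u. u \<noteq> {} \<and> u \<subseteq> {1..d}}"
    (is "weighted_star_disc d ?G ?a \<gamma> = Max ?M")
proof -
  have "finite {u. u \<noteq> {} \<and> u \<subseteq> {1..d::nat}}"
    by (rule finite_subset[of _ "Pow {1..d}"]) auto
  then have fin: "finite ?M" by simp
  have "?M \<noteq> {}" using assms(1) by auto
  then obtain u0 where u0: "u0 \<noteq> {}" "u0 \<subseteq> {1..d}"
    and max_eq: "Max ?M = \<gamma> u0 * (1 - (\<Prod>j\<in>u0. 1 - 1 / (2 * real (m j))))"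
    using Max_in[OF fin] by auto
  show ?thesis
  proof (rule antisym)
    show "weighted_star_disc d ?G ?a \<gamma> \<le> Max ?M"
    proof (rule weighted_star_disc_le[OF assms(1)])
      fix u \<alpha> assume u: "u \<noteq> {}" "u \<subseteq> {1..d}" and "\<alpha> \<in> unit_box d"
      then have "\<gamma> u * \<bar>local_disc d ?G ?a (with_ones u \<alpha>)\<bar> \<le> \<gamma> u * (1 - (\<Prod>j\<in>u. 1 - 1 / (2 * real (m j))))"
        using assms(3) abs_local_disc_centered_grid_le[OF assms(2)] by (intro mult_left_mono) auto
      also have "\<dots> \<le> Max ?M" using fin u by (intro Max_ge) auto
      finally show "\<gamma> u * \<bar>local_disc d ?G ?a (with_ones u \<alpha>)\<bar> \<le> Max ?M" .
    qed
    show "Max ?M \<le> weighted_star_disc d ?G ?a \<gamma>"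
      unfolding max_eq using assms(3) u0
      by (intro centered_grid_disc_bound_least[OF assms(2)] le_weighted_star_disc[OF finite_centered_grid]) auto
  qed
qed

lemma Max_weighted_corner_bound_le_Max_weighted_sum:
  fixes d :: nat and m :: "nat \<Rightarrow> nat"
  assumes "d \<ge> 1" "\<forall>j\<in>{1..d}. m j \<ge> 1"
    and "\<forall>u. u \<noteq> {} \<and> u \<subseteq> {1..d} \<longrightarrow> 0 \<le> \<gamma> u"
  shows "Max {\<gamma> u * (1 - (\<Prod>j\<in>u. 1 - 1 / (2 * real (m j)))) | u. u \<noteq> {} \<and> u \<subseteq> {1..d}}
    \<le> Max {\<gamma> u * (\<Sum>j\<in>u. 1 / (2 * real (m j))) | u. u \<noteq> {} \<and> u \<subseteq> {1..d}}"
proof -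
  have "finite {u. u \<noteq> {} \<and> u \<subseteq> {1..d::nat}}"
    by (rule finite_subset[of _ "Pow {1..d}"]) auto
  then have fin: "finite {f u | u. u \<noteq> {} \<and> u \<subseteq> {1..d}}" for f :: "nat set \<Rightarrow> real"
    by simp
  have pointwise: "\<gamma> u * (1 - (\<Prod>j\<in>u. 1 - 1 / (2 * real (m j)))) \<le> \<gamma> u * (\<Sum>j\<in>u. 1 / (2 * real (m j)))"
    if "u \<noteq> {}" "u \<subseteq> {1..d}" for u
  proof (rule mult_left_mono)
    show "1 - (\<Prod>j\<in>u. 1 - 1 / (2 * real (m j))) \<le> (\<Sum>j\<in>u. 1 / (2 * real (m j)))"
    proof (rule one_minus_prod_one_minus_le_sum)
      fix j assume "j \<in> u"
      with that assms(2) have "m j \<ge> 1" by blast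
      then show "1 / (2 * real (m j)) \<in> {0..1}" by simp
    qed
  qed (use assms(3) that in blast)
  show ?thesis
  proof (rule Max.boundedI[OF fin])
    show "{\<gamma> u * (1 - (\<Prod>j\<in>u. 1 - 1 / (2 * real (m j)))) | u. u \<noteq> {} \<and> u \<subseteq> {1..d}} \<noteq> {}"
      using assms(1) by auto
    fix x assume "x \<in> {\<gamma> u * (1 - (\<Prod>j\<in>u. 1 - 1 / (2 * real (m j)))) | u. u \<noteq> {} \<and> u \<subseteq> {1..d}}"
    then obtain u where u: "u \<noteq> {}" "u \<subseteq> {1..d}"
      and x: "x = \<gamma> u * (1 - (\<Prod>j\<in>u. 1 - 1 / (2 * real (m j))))" by blast
    have "x \<le> \<gamma> u * (\<Sum>j\<in>u. 1 / (2 * real (m j)))" unfolding x using pointwise[OF u] .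
    also have "\<dots> \<le> Max {\<gamma> u * (\<Sum>j\<in>u. 1 / (2 * real (m j))) | u. u \<noteq> {} \<and> u \<subseteq> {1..d}}"
      using u by (intro Max_ge fin) blast
    finally show "x \<le> Max {\<gamma> u * (\<Sum>j\<in>u. 1 / (2 * real (m j))) | u. u \<noteq> {} \<and> u \<subseteq> {1..d}}" .
  qed
qed

theorem proposition1:
  fixes d :: nat and m :: "nat \<Rightarrow> nat"
  assumes hd: "d \<ge> 1" and hm: "\<forall>j\<in>{1..d}. m j \<ge> 1"
  defines "N \<equiv> (\<Prod>j\<in>{1..d}. real (m j))"
  shows
    "(\<forall>(g::nat \<Rightarrow> real) (a::(nat \<Rightarrow> real) \<Rightarrow> real) l.
        (\<forall>j\<in>{1..d}. 0 \<le> g j \<and> g j \<le> 1) \<longrightarrow> l \<in> {1..d} \<longrightarrow>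
        weighted_star_disc d (centered_grid d m) a (\<lambda>u. \<Prod>j\<in>u. g j) \<ge> g l / (4 * real (m l)))
     \<and> star_disc d (centered_grid d m) (\<lambda>_. 1 / N) = 1 - (\<Prod>j\<in>{1..d}. 1 - 1 / (2 * real (m j)))
     \<and> (\<forall>\<gamma>::nat set \<Rightarrow> real.
        (\<forall>u. u \<noteq> {} \<and> u \<subseteq> {1..d} \<longrightarrow> 0 \<le> \<gamma> u \<and> \<gamma> u \<le> 1) \<longrightarrow>
        weighted_star_disc d (centered_grid d m) (\<lambda>_. 1 / N) \<gamma> =
          Max {\<gamma> u * (1 - (\<Prod>j\<in>u. 1 - 1 / (2 * real (m j)))) | u. u \<noteq> {} \<and> u \<subseteq> {1..d}}
        \<and> weighted_star_disc d (centered_grid d m) (\<lambda>_. 1 / N) \<gamma> \<le>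
          Max {\<gamma> u * (\<Sum>j\<in>u. 1 / (2 * real (m j))) | u. u \<noteq> {} \<and> u \<subseteq> {1..d}})"
proof (intro conjI allI impI)
  fix g :: "nat \<Rightarrow> real" and a :: "(nat \<Rightarrow> real) \<Rightarrow> real" and l
  assume g: "\<forall>j\<in>{1..d}. 0 \<le> g j \<and> g j \<le> 1" and l: "l \<in> {1..d}"
  have "g l / (4 * real (m l)) \<le> g l / (2 * real (m l))"
    using g l hm by (intro divide_left_mono) force+
  also have "\<dots> \<le> weighted_star_disc d (centered_grid d m) a (\<lambda>u. \<Prod>j\<in>u. g j)"
    using hm g l by (rule weighted_star_disc_centered_grid_ge)
  finally show "g l / (4 * real (m l)) \<le> weighted_star_disc d (centered_grid d m) a (\<lambda>u. \<Prod>j\<in>u. g j)" .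
next
  show "star_disc d (centered_grid d m) (\<lambda>_. 1 / N) = 1 - (\<Prod>j\<in>{1..d}. 1 - 1 / (2 * real (m j)))"
    unfolding N_def using hm by (rule star_disc_centered_grid)
next
  fix \<gamma> :: "nat set \<Rightarrow> real"
  assume h\<gamma>: "\<forall>u. u \<noteq> {} \<and> u \<subseteq> {1..d} \<longrightarrow> 0 \<le> \<gamma> u \<and> \<gamma> u \<le> 1"
  show eq: "weighted_star_disc d (centered_grid d m) (\<lambda>_. 1 / N) \<gamma> =
      Max {\<gamma> u * (1 - (\<Prod>j\<in>u. 1 - 1 / (2 * real (m j)))) | u. u \<noteq> {} \<and> u \<subseteq> {1..d}}"
    unfolding N_def using hd hm h\<gamma> by (rule weighted_star_disc_centered_grid)
  show "weighted_star_disc d (centered_grid d m) (\<lambda>_. 1 / N) \<gamma> \<le>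
      Max {\<gamma> u * (\<Sum>j\<in>u. 1 / (2 * real (m j))) | u. u \<noteq> {} \<and> u \<subseteq> {1..d}}"
    unfolding eq using hd hm h\<gamma> by (intro Max_weighted_corner_bound_le_Max_weighted_sum) auto
qed

end
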